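(* Let $Q\in\mathbb N$ and $k\in\mathbb N_0\cap[0,2Q-1]$. Then $\|1\|_{k,Q}=\frac{T^k}{k!}$, where $1$ denotes the constant function $[0,T]\times\mathbb R^d\ni(t,x)\mapsto1$.
   Context: $T\in(0,\infty)$, $d\in\mathbb N$, $(\Omega,\mathcal F,\mathbb P)$ a probability space and $W^0\colon[0,T]\times\Omega\to\mathbb R^d$ a standard Brownian motion. Gauss–Legendre weights: for $n\in\mathbb N$ let $c^n_1,\dots,c^n_n$ be the roots of $x\mapsto\frac{1}{2^nn!}\frac{d^n}{dx^n}[(x^2-1)^n]$; for $a\le b$ let $q^{n,[a,b]}(t)=\int_a^b\prod_{i:\,c^n_i\neq\frac{2t-(a+b)}{b-a}}\frac{2x-(b-a)c^n_i-(a+b)}{2t-(b-a)c^n_i-(a+b)}\,dx$ if $a<b$ and $\frac{2t-(a+b)}{b-a}\in\{c^n_1,\dots,c^n_n\}$, else $0$; sums $\sum_{t\in[a,b]}$ range over the finitely many points with nonzero weight. For $Q\in\mathbb N$: $\bar q^{0,Q}=\mathbb 1_{\{0\}}$, $\bar q^{n,Q}(t)=\sum_{s\in[0,t]}\bar q^{n-1,Q}(s)q^{Q,[s,T]}(t)$. Semi-norm: $\|V\|_{k,Q}=\sum_{t\in[0,T]}\bar q^{k,Q}(t)\sup_{s\in[t,T]}\sup_{u\in[0,s]}\sup_{z\in\mathbb R^d}(\mathbb E[|V(s,z+W^0_u)|^2])^{1/2}$. *)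

theory Defs
  imports "HOL-Probability.Probability" "HOL-Computational_Algebra.Polynomial"
begin

definition std_gauss_vec_density :: "real \<Rightarrow> real ^ 'd \<Rightarrow> real" where
  "std_gauss_vec_density \<sigma> x = (\<Prod>i\<in>UNIV. normal_density 0 \<sigma> (x $ i))"

definition std_brownian_motion ::
  "'a measure \<Rightarrow> real \<Rightarrow> (real \<Rightarrow> 'a \<Rightarrow> real ^ 'd) \<Rightarrow> bool" where
  "std_brownian_motion M T W \<longleftrightarrow>
     (\<forall>t\<in>{0..T}. W t \<in> borel_measurable M) \<and>
     (\<forall>\<omega>\<in>space M. W 0 \<omega> = 0) \<and>
     (\<forall>\<omega>\<in>space M. continuous_on {0..T} (\<lambda>t. W t \<omega>)) \<and>
     (\<forall>s t. 0 \<le> s \<and> s < t \<and> t \<le> T \<longrightarrow>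
        distributed M lborel (\<lambda>\<omega>. W t \<omega> - W s \<omega>) (std_gauss_vec_density (sqrt (t - s)))) \<and>
     (\<forall>(n::nat) (tt::nat \<Rightarrow> real). 0 \<le> tt 0 \<and> tt n \<le> T \<and> (\<forall>j<n. tt j < tt (Suc j)) \<longrightarrow>
        prob_space.indep_vars M (\<lambda>_. borel) (\<lambda>j \<omega>. W (tt (Suc j)) \<omega> - W (tt j) \<omega>) {..<n})"

definition legendre_poly :: "nat \<Rightarrow> real poly" where
  "legendre_poly n = smult (1 / (2 ^ n * fact n)) ((pderiv ^^ n) ([:-1, 0, 1:] ^ n))"

definition gl_nodes :: "nat \<Rightarrow> real set" where
  "gl_nodes n = {x. poly (legendre_poly n) x = 0}"

definition gl_weight :: "nat \<Rightarrow> real \<Rightarrow> real \<Rightarrow> real \<Rightarrow> real" where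
  "gl_weight n a b t =
     (let \<xi> = (2 * t - (a + b)) / (b - a) in
      if a < b \<and> \<xi> \<in> gl_nodes n then
        integral {a..b} (\<lambda>x. \<Prod>c\<in>gl_nodes n - {\<xi>}.
           (2 * x - (b - a) * c - (a + b)) / (2 * t - (b - a) * c - (a + b)))
      else 0)"

definition supp_sum :: "real set \<Rightarrow> (real \<Rightarrow> 'b::comm_monoid_add) \<Rightarrow> 'b" where
  "supp_sum S f = sum f {x\<in>S. f x \<noteq> 0}"

fun qbar :: "real \<Rightarrow> nat \<Rightarrow> nat \<Rightarrow> real \<Rightarrow> real" where
  "qbar T Q 0 t = (if t = 0 then 1 else 0)"
| "qbar T Q (Suc n) t = supp_sum {0..t} (\<lambda>s. qbar T Q n s * gl_weight Q s T t)"

definition sqrt_ennreal :: "ennreal \<Rightarrow> ennreal" where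
  "sqrt_ennreal e = (if e = \<top> then \<top> else ennreal (sqrt (enn2real e)))"

definition L2_sup :: "'a measure \<Rightarrow> (real \<Rightarrow> 'a \<Rightarrow> real ^ 'd) \<Rightarrow> real
    \<Rightarrow> (real \<Rightarrow> real ^ 'd \<Rightarrow> real) \<Rightarrow> real \<Rightarrow> ennreal" where
  "L2_sup M W T V t =
     (SUP s\<in>{t..T}. SUP u\<in>{0..s}. SUP z\<in>(UNIV :: (real ^ 'd) set).
        sqrt_ennreal (\<integral>\<^sup>+ \<omega>. ennreal ((V s (z + W u \<omega>))\<^sup>2) \<partial>M))"

definition gl_seminorm :: "'a measure \<Rightarrow> (real \<Rightarrow> 'a \<Rightarrow> real ^ 'd) \<Rightarrow> real \<Rightarrow> nat \<Rightarrow> nat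
    \<Rightarrow> (real \<Rightarrow> real ^ 'd \<Rightarrow> real) \<Rightarrow> ereal" where
  "gl_seminorm M W T k Q V =
     supp_sum {0..T} (\<lambda>t. ereal (qbar T Q k t) * enn2ereal (L2_sup M W T V t))"

end

theory Submission
  imports Defs
begin

text \<open>
  For the constant function 1 every expectation in the semi-norm equals 1, so the semi-norm is the
  total mass of the weights qbar^k. Unfolding the recursion for
  qbar, the mass of qbar^(n+1) against (T - t)^m/m! is the mass of qbar^n against the Gauss--Legendre
  rule on [s, T] applied to (T - t)^m/m!. The rule has Q nodes and is exact up to degree 2Q - 1, so it
  returns (T - s)^(m+1)/(m+1)!. Starting from m = 0 and iterating k <= 2Q - 1 times gives T^k/k!.

  Exactness is the classical argument: the Q-th derivative of (x^2 - 1)^Q has Q simple roots in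
  (-1, 1) by Rolle's theorem and is orthogonal to all polynomials of lower degree by repeated
  integration by parts; a polynomial of degree at most 2Q - 1 differs from its Lagrange interpolant at
  the nodes by a multiple of it, which integrates to zero.
\<close>

section \<open>Polynomial calculus\<close>

lemma has_integral_poly_pderiv:
  fixes p :: "real poly"
  assumes "a \<le> b"
  shows "(poly (pderiv p) has_integral poly p b - poly p a) {a..b}"
  by (rule fundamental_theorem_of_calculus[OF assms])
    (metis has_real_derivative_iff_has_vector_derivative has_field_derivative_at_within poly_DERIV)

lemma integrable_poly: "poly (p :: real poly) integrable_on {a..b}"
  by (rule integrable_continuous_interval) (auto intro: continuous_intros)

lemma integral_poly_pderiv_mult:
  fixes f g :: "real poly"
  assumes "a \<le> b" "poly f a = 0" "poly f b = 0"
  shows "integral {a..b} (poly (pderiv f * g)) = - integral {a..b} (poly (f * pderiv g))"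
proof -
  have "(poly (pderiv (f * g)) has_integral 0) {a..b}"
    using has_integral_poly_pderiv[OF assms(1), of "f * g"] assms(2,3) by simp
  moreover have "poly (pderiv (f * g)) = (\<lambda>x. poly (pderiv f * g) x + poly (f * pderiv g) x)"
    by (rule ext) (simp add: pderiv_mult algebra_simps)
  ultimately have "integral {a..b} (poly (pderiv f * g)) + integral {a..b} (poly (f * pderiv g)) = 0"
    using integral_add[OF integrable_poly integrable_poly] by (metis integral_unique)
  then show ?thesis by simp
qed

lemma integral_affine_to_unit_interval:
  fixes f :: "real \<Rightarrow> real"
  assumes "a < b" "f integrable_on {a..b}"
  shows "integral {-1..1} (\<lambda>y. f ((b - a) / 2 * y + (a + b) / 2)) = 2 / (b - a) * integral {a..b} f"
proof -
  have m: "(b - a) / 2 > 0" using assms(1) by simp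
  have "((\<lambda>y. f (((b - a) / 2) *\<^sub>R y + (a + b) / 2)) has_integral integral {a..b} f /\<^sub>R ((b - a) / 2) ^ DIM(real))
      (cbox ((a - (a + b) / 2) /\<^sub>R ((b - a) / 2)) ((b - (a + b) / 2) /\<^sub>R ((b - a) / 2)))"
    using has_integral_affinity'[OF integrable_integral[OF assms(2)[folded cbox_interval]] m, where c = "(a + b) / 2"]
    by simp
  moreover have "(a - (a + b) / 2) /\<^sub>R ((b - a) / 2) = -1" "(b - (a + b) / 2) /\<^sub>R ((b - a) / 2) = 1"
    using assms(1) by (simp_all add: field_simps)
  moreover have "integral {a..b} f /\<^sub>R ((b - a) / 2) ^ DIM(real) = 2 / (b - a) * integral {a..b} f"
    by simp
  ultimately show ?thesis
    unfolding cbox_interval real_scaleR_def by (metis integral_unique)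
qed

lemma poly_rolle:
  fixes p :: "real poly"
  assumes "a < b" "poly p a = poly p b"
  shows "\<exists>z\<in>{a<..<b}. poly (pderiv p) z = 0"
proof -
  have "\<exists>z. a < z \<and> z < b \<and> (\<lambda>v. poly (pderiv p) z * v) = (\<lambda>v. 0)"
    by (rule Rolle_deriv[OF assms])
      (auto intro: continuous_intros has_field_derivative_imp_has_derivative[OF poly_DERIV])
  then show ?thesis by (metis greaterThanLessThan_iff mult.right_neutral)
qed

lemma linear_power_dvd_pderiv:
  fixes p :: "'a::idom poly"
  assumes "[:-a, 1:] ^ Suc m dvd p"
  shows "[:-a, 1:] ^ m dvd pderiv p"
proof -
  obtain r where r: "p = [:-a, 1:] ^ Suc m * r" using assms by (auto elim: dvdE)
  have "pderiv p = [:-a, 1:] ^ m * ([:-a, 1:] * pderiv r + smult (of_nat (Suc m)) r)"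
    unfolding r pderiv_mult pderiv_power_Suc by (simp add: pderiv_pCons algebra_simps)
  then show ?thesis by simp
qed

lemma linear_power_dvd_higher_pderiv:
  fixes p :: "'a::idom poly"
  assumes "j \<le> n" "[:-a, 1:] ^ n dvd p"
  shows "[:-a, 1:] ^ (n - j) dvd (pderiv ^^ j) p"
  using assms
proof (induction j)
  case 0
  then show ?case by simp
next
  case (Suc j)
  then have "[:-a, 1:] ^ Suc (n - Suc j) dvd (pderiv ^^ j) p"
    by (simp add: Suc_diff_Suc)
  then show ?case by (simp add: linear_power_dvd_pderiv)
qed

section \<open>The Legendre nodes\<close>

lemma strict_mono_on_atMost_SucI:
  fixes f :: "nat \<Rightarrow> 'a::order"
  assumes "\<And>i. i < n \<Longrightarrow> f i < f (Suc i)"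
  shows "strict_mono_on {..n} f"
proof (rule strict_mono_onI)
  fix r s assume "r \<in> {..n}" "s \<in> {..n}" "r < s"
  then have "Suc r \<le> s" "s \<le> n" by auto
  then show "f r < f s"
  proof (induction s rule: dec_induct)
    case base
    then show ?case using assms by simp
  next
    case (step s)
    then have "f r < f s" "f s < f (Suc s)" using assms by auto
    then show ?case by (rule order.strict_trans)
  qed
qed

lemma poly_pderiv_roots_between:
  fixes p :: "real poly" and z :: "nat \<Rightarrow> real"
  assumes "strict_mono_on {..n} z" "\<And>i. i \<le> n \<Longrightarrow> poly p (z i) = 0"
  obtains w where "\<And>i. i < n \<Longrightarrow> z i < w i \<and> w i < z (Suc i) \<and> poly (pderiv p) (w i) = 0"
proof -
  have "\<exists>w. z i < w \<and> w < z (Suc i) \<and> poly (pderiv p) w = 0" if "i < n" for i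
  proof -
    have "z i < z (Suc i)" using strict_mono_onD[OF assms(1), of i "Suc i"] that by simp
    moreover have "poly p (z i) = poly p (z (Suc i))" using assms(2) that by simp
    ultimately have "\<exists>w\<in>{z i<..<z (Suc i)}. poly (pderiv p) w = 0" by (rule poly_rolle)
    then show ?thesis by auto
  qed
  then show ?thesis using that by metis
qed

definition rodrigues_poly :: "nat \<Rightarrow> nat \<Rightarrow> real poly" where
  "rodrigues_poly Q j = (pderiv ^^ j) ([:-1, 0, 1:] ^ Q)"

lemma rodrigues_poly_Suc: "rodrigues_poly Q (Suc j) = pderiv (rodrigues_poly Q j)"
  by (simp add: rodrigues_poly_def)

lemma degree_rodrigues_poly: "degree (rodrigues_poly Q j) = 2 * Q - j"
proof -
  have "degree ([:-1, 0, 1:] ^ Q :: real poly) = 2 * Q" by (simp add: degree_power_eq)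
  then show ?thesis unfolding rodrigues_poly_def by (induction j) (simp_all add: degree_pderiv)
qed

lemma rodrigues_poly_nonzero: "1 \<le> Q \<Longrightarrow> rodrigues_poly Q Q \<noteq> 0"
  using degree_rodrigues_poly[of Q Q] by auto

lemma gl_nodes_rodrigues_poly: "gl_nodes Q = {x. poly (rodrigues_poly Q Q) x = 0}"
  by (simp add: gl_nodes_def legendre_poly_def rodrigues_poly_def)

lemma rodrigues_poly_boundary_roots:
  assumes "j < Q"
  shows "poly (rodrigues_poly Q j) 1 = 0" "poly (rodrigues_poly Q j) (-1) = 0"
proof -
  have factor: "[:-1, 0, 1:] ^ Q = [:-1, 1:] ^ Q * [:-(-1), 1 :: real:] ^ Q"
    unfolding power_mult_distrib[symmetric] by simp
  have "[:-c, 1:] ^ (Q - j) dvd rodrigues_poly Q j" if "c = 1 \<or> c = -1" for c :: real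
    unfolding rodrigues_poly_def using assms that factor
    by (intro linear_power_dvd_higher_pderiv) auto
  moreover have "Q - j = Suc (Q - j - 1)" using assms by simp
  ultimately have "[:-c, 1:] dvd rodrigues_poly Q j" if "c = 1 \<or> c = -1" for c :: real
    using that by (metis dvd_mult_left power_Suc)
  then show "poly (rodrigues_poly Q j) 1 = 0" "poly (rodrigues_poly Q j) (-1) = 0"
    unfolding poly_eq_0_iff_dvd by blast+
qed

lemma rodrigues_poly_interior_roots:
  assumes "j \<le> Q"
  shows "\<exists>z. strict_mono_on {..Suc j} z \<and> z 0 = -1 \<and> z (Suc j) = 1 \<and>
           (\<forall>i\<in>{1..j}. poly (rodrigues_poly Q j) (z i) = 0)"
  using assms
proof (induction j)
  case 0
  show ?case
    by (rule exI[of _ "\<lambda>i. if i = 0 then -1 else 1"]) (auto intro: strict_mono_on_atMost_SucI)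
next
  case (Suc j)
  then obtain z where z: "strict_mono_on {..Suc j} z" "z 0 = -1" "z (Suc j) = 1"
    "\<forall>i\<in>{1..j}. poly (rodrigues_poly Q j) (z i) = 0"
    by auto
  have roots: "poly (rodrigues_poly Q j) (z i) = 0" if "i \<le> Suc j" for i
    using z rodrigues_poly_boundary_roots[of j Q] Suc.prems that
    by (cases "i = 0 \<or> i = Suc j") auto
  obtain w where w: "\<And>i. i < Suc j \<Longrightarrow>
      z i < w i \<and> w i < z (Suc i) \<and> poly (pderiv (rodrigues_poly Q j)) (w i) = 0"
    using poly_pderiv_roots_between[OF z(1) roots] by blast
  define z' where "z' i = (if i = 0 then -1 else if i \<le> Suc j then w (i - 1) else 1)" for i
  have "strict_mono_on {..Suc (Suc j)} z'"
  proof (rule strict_mono_on_atMost_SucI)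
    fix i assume "i < Suc (Suc j)"
    then consider "i = 0" | "i = Suc j" | k where "i = Suc k" "k < j"
      by (cases i) (auto simp: less_Suc_eq)
    then show "z' i < z' (Suc i)"
    proof cases
      case 1
      then show ?thesis using w[of 0] z(2) by (simp add: z'_def)
    next
      case 2
      then show ?thesis using w[of j] z(3) by (simp add: z'_def)
    next
      case 3
      then show ?thesis using w[of k] w[of "Suc k"] by (simp add: z'_def)
    qed
  qed
  moreover have "\<forall>i\<in>{1..Suc j}. poly (rodrigues_poly Q (Suc j)) (z' i) = 0"
    using w by (auto simp: z'_def rodrigues_poly_Suc)
  moreover have "z' 0 = -1" "z' (Suc (Suc j)) = 1" by (simp_all add: z'_def)
  ultimately show ?case by blast
qed

lemma gl_nodes_eq_image:
  assumes "1 \<le> Q"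
  obtains z where "strict_mono_on {..Suc Q} z" "z 0 = -1" "z (Suc Q) = 1" "gl_nodes Q = z ` {1..Q}"
proof -
  obtain z where z: "strict_mono_on {..Suc Q} z" "z 0 = -1" "z (Suc Q) = 1"
    "\<forall>i\<in>{1..Q}. poly (rodrigues_poly Q Q) (z i) = 0"
    using rodrigues_poly_interior_roots[of Q Q] by auto
  have "inj_on z {1..Q}"
    using strict_mono_on_imp_inj_on[OF z(1)] by (rule inj_on_subset) auto
  then have card_image: "card (z ` {1..Q}) = Q" by (simp add: card_image)
  have sub: "z ` {1..Q} \<subseteq> gl_nodes Q" using z(4) by (auto simp: gl_nodes_rodrigues_poly)
  have fin: "finite (gl_nodes Q)"
    unfolding gl_nodes_rodrigues_poly using poly_roots_finite rodrigues_poly_nonzero[OF assms] .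
  have "card (gl_nodes Q) \<le> Q"
    unfolding gl_nodes_rodrigues_poly
    using card_poly_roots_bound[OF rodrigues_poly_nonzero[OF assms]] degree_rodrigues_poly[of Q Q]
    by simp
  then have "z ` {1..Q} = gl_nodes Q"
    using card_subset_eq[OF fin sub] card_image card_mono[OF fin sub] by simp
  then show ?thesis using that z by simp
qed

lemma finite_gl_nodes: "1 \<le> Q \<Longrightarrow> finite (gl_nodes Q)"
  by (erule gl_nodes_eq_image) simp

lemma card_gl_nodes:
  assumes "1 \<le> Q"
  shows "card (gl_nodes Q) = Q"
proof -
  obtain z where z: "strict_mono_on {..Suc Q} z" "gl_nodes Q = z ` {1..Q}"
    using gl_nodes_eq_image[OF assms] by blast
  have "inj_on z {1..Q}"
    using strict_mono_on_imp_inj_on[OF z(1)] by (rule inj_on_subset) auto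
  then show ?thesis using z(2) by (simp add: card_image)
qed

lemma gl_nodes_subset: "1 \<le> Q \<Longrightarrow> gl_nodes Q \<subseteq> {-1<..<1}"
proof -
  assume "1 \<le> Q"
  then obtain z where z: "strict_mono_on {..Suc Q} z" "z 0 = -1" "z (Suc Q) = 1" "gl_nodes Q = z ` {1..Q}"
    by (rule gl_nodes_eq_image)
  have "z 0 < z i" "z i < z (Suc Q)" if "i \<in> {1..Q}" for i
    using that by (auto intro!: strict_mono_onD[OF z(1)])
  then show ?thesis using z(2-4) by auto
qed

lemma rodrigues_poly_orthogonal:
  assumes "m \<le> Q" "degree s < m"
  shows "integral {-1..1} (poly (rodrigues_poly Q m * s)) = 0"
  using assms
proof (induction m arbitrary: s)
  case 0
  then show ?case by simp
next
  case (Suc m)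
  have "integral {-1..1} (poly (rodrigues_poly Q (Suc m) * s)) =
      - integral {-1..1} (poly (rodrigues_poly Q m * pderiv s))"
    unfolding rodrigues_poly_Suc
    using rodrigues_poly_boundary_roots[of m Q] Suc.prems
    by (intro integral_poly_pderiv_mult) auto
  also have "integral {-1..1} (poly (rodrigues_poly Q m * pderiv s)) = 0"
  proof (cases "m = 0")
    case True
    then have "pderiv s = 0" using Suc.prems by (simp add: pderiv_eq_0_iff)
    then show ?thesis by (simp add: poly_0[abs_def])
  next
    case False
    then have "degree (pderiv s) < m" using Suc.prems by (simp add: degree_pderiv)
    then show ?thesis using Suc.prems by (intro Suc.IH) simp_all
  qed
  finally show ?case by simp
qed

lemma integral_poly_vanishing_on_gl_nodes:
  fixes q :: "real poly"
  assumes Q: "1 \<le> Q" and deg: "degree q \<le> 2 * Q - 1"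
    and vanish: "\<And>c. c \<in> gl_nodes Q \<Longrightarrow> poly q c = 0"
  shows "integral {-1..1} (poly q) = 0"
proof -
  define P where "P = rodrigues_poly Q Q"
  have P: "P \<noteq> 0" "degree P = Q" unfolding P_def
    using rodrigues_poly_nonzero[OF Q] degree_rodrigues_poly[of Q Q] by simp_all
  txt \<open>q vanishes at the Q distinct roots of P, which has degree Q, so P divides q.\<close>
  have "q mod P = 0"
  proof (rule ccontr)
    assume nz: "q mod P \<noteq> 0"
    have "gl_nodes Q \<subseteq> {x. poly (q mod P) x = 0}"
    proof
      fix c assume c: "c \<in> gl_nodes Q"
      have "poly q c = poly P c * poly (q div P) c + poly (q mod P) c"
        by (metis div_mult_mod_eq mult.commute poly_add poly_mult)
      then show "c \<in> {x. poly (q mod P) x = 0}"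
        using vanish[OF c] c by (simp add: P_def gl_nodes_rodrigues_poly)
    qed
    then have "Q \<le> card {x. poly (q mod P) x = 0}"
      using card_mono[OF poly_roots_finite[OF nz]] card_gl_nodes[OF Q] by metis
    also have "\<dots> \<le> degree (q mod P)" by (rule card_poly_roots_bound[OF nz])
    also have "\<dots> < Q" using degree_mod_less'[OF P(1) nz] P(2) by simp
    finally show False by simp
  qed
  then have q: "q = P * (q div P)" by (metis add.right_neutral div_mult_mod_eq mult.commute)
  show ?thesis
  proof (cases "q div P = 0")
    case True
    then show ?thesis using q by (simp add: poly_0[abs_def])
  next
    case False
    then have "degree (q div P) < Q"
      using deg Q P degree_mult_eq[OF P(1) False] q by simp
    then have "integral {-1..1} (poly (P * (q div P))) = 0"
      unfolding P_def by (rule rodrigues_poly_orthogonal[OF order_refl])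
    then show ?thesis by (metis q)
  qed
qed

section \<open>Exactness of Gauss--Legendre quadrature\<close>

definition lagrange_basis :: "real set \<Rightarrow> real \<Rightarrow> real poly" where
  "lagrange_basis N c = (\<Prod>d\<in>N - {c}. [:- d / (c - d), 1 / (c - d):])"

lemma poly_lagrange_basis: "poly (lagrange_basis N c) x = (\<Prod>d\<in>N - {c}. (x - d) / (c - d))"
  unfolding lagrange_basis_def poly_prod by (simp add: diff_divide_distrib)

lemma degree_lagrange_basis: "finite N \<Longrightarrow> degree (lagrange_basis N c) \<le> card (N - {c})"
  unfolding lagrange_basis_def
  by (rule order.trans[OF degree_prod_sum_le]) (auto intro: sum_bounded_above[where K = 1, simplified])

lemma poly_lagrange_basis_node:
  assumes "finite N" "c \<in> N" "c' \<in> N"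
  shows "poly (lagrange_basis N c') c = (if c = c' then 1 else 0)"
proof (cases "c = c'")
  case True
  then show ?thesis by (simp add: poly_lagrange_basis)
next
  case False
  then have "(\<Prod>d\<in>N - {c'}. (c - d) / (c' - d)) = 0"
    using assms by (intro prod_zero) auto
  then show ?thesis using False by (simp add: poly_lagrange_basis)
qed

lemma poly_lagrange_interpolant_node:
  assumes "finite N" "c \<in> N"
  shows "poly (\<Sum>c'\<in>N. smult (f c') (lagrange_basis N c')) c = f c"
  using assms by (simp add: poly_sum poly_lagrange_basis_node if_distrib cong: if_cong)

lemma gauss_legendre_exact_unit_interval:
  fixes r :: "real poly"
  assumes Q: "1 \<le> Q" and deg: "degree r \<le> 2 * Q - 1"
  shows "(\<Sum>c\<in>gl_nodes Q. integral {-1..1} (poly (lagrange_basis (gl_nodes Q) c)) * poly r c) =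
    integral {-1..1} (poly r)"
proof -
  let ?N = "gl_nodes Q" and ?L = "lagrange_basis (gl_nodes Q)"
  define I where "I = (\<Sum>c\<in>?N. smult (poly r c) (?L c))"
  have fin: "finite ?N" using finite_gl_nodes[OF Q] .
  have "poly I = (\<lambda>x. \<Sum>c\<in>?N. poly (smult (poly r c) (?L c)) x)"
    by (simp add: I_def poly_sum fun_eq_iff)
  then have "integral {-1..1} (poly I) = (\<Sum>c\<in>?N. integral {-1..1} (poly (smult (poly r c) (?L c))))"
    by (simp only: integral_sum[OF fin integrable_poly])
  also have "\<dots> = (\<Sum>c\<in>?N. poly r c * integral {-1..1} (poly (?L c)))"
    by (simp add: poly_smult[abs_def])
  finally have "integral {-1..1} (poly I) = (\<Sum>c\<in>?N. poly r c * integral {-1..1} (poly (?L c)))" .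
  moreover have "integral {-1..1} (poly (r - I)) = 0"
  proof (rule integral_poly_vanishing_on_gl_nodes[OF Q])
    have "degree I \<le> Q - 1"
      unfolding I_def using fin card_gl_nodes[OF Q]
      by (intro degree_sum_le order.trans[OF degree_smult_le] order.trans[OF degree_lagrange_basis])
        (auto simp: card_Diff_singleton)
    then show "degree (r - I) \<le> 2 * Q - 1"
      using deg degree_diff_le_max[of r I] by simp
    show "poly (r - I) c = 0" if "c \<in> ?N" for c
      using poly_lagrange_interpolant_node[OF fin that] by (simp add: I_def)
  qed
  moreover have "integral {-1..1} (poly (r - I)) = integral {-1..1} (poly r) - integral {-1..1} (poly I)"
    by (simp add: poly_diff[abs_def] integral_diff integrable_poly)
  ultimately show ?thesis by (simp add: mult.commute)
qed

definition gl_point :: "real \<Rightarrow> real \<Rightarrow> real \<Rightarrow> real" where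
  "gl_point a b c = (b - a) / 2 * c + (a + b) / 2"

lemma gl_point_bounds:
  assumes "a < b" "c \<in> {-1<..<1}"
  shows "a < gl_point a b c" "gl_point a b c < b"
proof -
  have "(b - a) * -1 < (b - a) * c" "(b - a) * c < (b - a) * 1"
    using assms by (simp_all only: greaterThanLessThan_iff mult_strict_left_mono diff_gt_0_iff_gt)
  then show "a < gl_point a b c" "gl_point a b c < b"
    by (simp_all add: gl_point_def field_simps)
qed

lemma inj_gl_point: "a < b \<Longrightarrow> inj (gl_point a b)"
  by (rule injI) (simp add: gl_point_def)

lemma gl_weight_nonzeroD:
  assumes "gl_weight Q a b t \<noteq> 0"
  shows "a < b" "\<exists>c\<in>gl_nodes Q. t = gl_point a b c"
proof -
  define \<xi> where "\<xi> = (2 * t - (a + b)) / (b - a)"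
  have "a < b \<and> \<xi> \<in> gl_nodes Q"
    using assms unfolding gl_weight_def Let_def \<xi>_def by (auto split: if_splits)
  moreover have "t = gl_point a b \<xi>" if "a < b"
    using that unfolding gl_point_def \<xi>_def by (simp add: field_simps)
  ultimately show "a < b" "\<exists>c\<in>gl_nodes Q. t = gl_point a b c" by auto
qed

lemma gl_weight_gl_point:
  assumes ab: "a < b" and c: "c \<in> gl_nodes Q"
  shows "gl_weight Q a b (gl_point a b c) =
    (b - a) / 2 * integral {-1..1} (poly (lagrange_basis (gl_nodes Q) c))"
proof -
  let ?L = "lagrange_basis (gl_nodes Q) c"
  define g where "g = (\<lambda>x. poly ?L ((2 * x - (a + b)) / (b - a)))"
  have "(2 * gl_point a b c - (a + b)) / (b - a) = c"
    using ab by (simp add: gl_point_def field_simps)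
  moreover have "(2 * x - (b - a) * d - (a + b)) / (2 * gl_point a b c - (b - a) * d - (a + b)) =
      ((2 * x - (a + b)) / (b - a) - d) / (c - d)" for x d
  proof -
    have "2 * x - (b - a) * d - (a + b) = (b - a) * ((2 * x - (a + b)) / (b - a) - d)"
      using ab by (simp add: field_simps)
    moreover have "2 * gl_point a b c - (b - a) * d - (a + b) = (b - a) * (c - d)"
      by (simp add: gl_point_def field_simps)
    ultimately show ?thesis using ab by simp
  qed
  ultimately have "gl_weight Q a b (gl_point a b c) = integral {a..b} g"
    using ab c by (simp add: gl_weight_def g_def poly_lagrange_basis)
  moreover have "g ((b - a) / 2 * y + (a + b) / 2) = poly ?L y" for y
  proof -
    have affine: "2 * ((b - a) / 2 * y + (a + b) / 2) - (a + b) = (b - a) * y"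
      by (simp add: field_simps)
    show ?thesis unfolding g_def affine using ab by simp
  qed
  moreover have "g integrable_on {a..b}"
    unfolding g_def using ab by (intro integrable_continuous_interval continuous_intros) auto
  ultimately show ?thesis
    using integral_affine_to_unit_interval[OF ab, of g] ab by simp
qed

theorem gauss_legendre_exact:
  fixes p :: "real poly"
  assumes Q: "1 \<le> Q" and ab: "a < b" and deg: "degree p \<le> 2 * Q - 1"
  shows "(\<Sum>c\<in>gl_nodes Q. gl_weight Q a b (gl_point a b c) * poly p (gl_point a b c)) =
    integral {a..b} (poly p)"
proof -
  define r where "r = p \<circ>\<^sub>p [:(a + b) / 2, (b - a) / 2:]"
  have r: "poly r = (\<lambda>y. poly p (gl_point a b y))"
    by (simp add: r_def poly_pcompose gl_point_def algebra_simps fun_eq_iff)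
  have dr: "degree r \<le> 2 * Q - 1"
    using deg ab by (simp add: r_def degree_pcompose)
  have "(\<Sum>c\<in>gl_nodes Q. gl_weight Q a b (gl_point a b c) * poly p (gl_point a b c)) =
      (\<Sum>c\<in>gl_nodes Q. (b - a) / 2 * (integral {-1..1} (poly (lagrange_basis (gl_nodes Q) c)) * poly r c))"
    by (intro sum.cong refl) (simp add: gl_weight_gl_point[OF ab] r)
  also have "\<dots> = (b - a) / 2 * integral {-1..1} (poly r)"
    unfolding sum_distrib_left[symmetric] gauss_legendre_exact_unit_interval[OF Q dr] ..
  also have "\<dots> = integral {a..b} (poly p)"
    using integral_affine_to_unit_interval[OF ab integrable_poly, of p] ab
    by (simp add: r gl_point_def)
  finally show ?thesis .
qed

section \<open>The iterated weights\<close>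

lemma supp_sum_eq_sum:
  assumes "finite A" "\<And>x. x \<in> S \<Longrightarrow> f x \<noteq> 0 \<Longrightarrow> x \<in> A" "\<And>x. x \<in> A \<Longrightarrow> x \<notin> S \<Longrightarrow> f x = 0"
  shows "supp_sum S f = sum f A"
  unfolding supp_sum_def by (rule sum.mono_neutral_left[OF assms(1)]) (use assms in auto)

fun qbar_points :: "real \<Rightarrow> nat \<Rightarrow> nat \<Rightarrow> real set" where
  "qbar_points T Q 0 = {0}"
| "qbar_points T Q (Suc n) = (\<Union>s\<in>qbar_points T Q n. gl_point s T ` gl_nodes Q)"

lemma finite_qbar_points: "1 \<le> Q \<Longrightarrow> finite (qbar_points T Q n)"
  by (induction n) (auto simp: finite_gl_nodes)

lemma qbar_points_subset:
  assumes Q: "1 \<le> Q" and T: "0 \<le> T"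
  shows "qbar_points T Q n \<subseteq> {0..T}"
proof (induction n)
  case 0
  then show ?case using T by simp
next
  case (Suc n)
  have "gl_point s T c \<in> {0..T}" if "s \<in> {0..T}" "c \<in> gl_nodes Q" for s c
  proof (cases "s = T")
    case True
    then show ?thesis using T by (simp add: gl_point_def field_simps)
  next
    case False
    then show ?thesis
      using gl_point_bounds[of s T c] gl_nodes_subset[OF Q] that by fastforce
  qed
  then show ?case using Suc.IH by auto
qed

lemma qbar_nonzero_imp_mem_qbar_points:
  "1 \<le> Q \<Longrightarrow> qbar T Q n t \<noteq> 0 \<Longrightarrow> t \<in> qbar_points T Q n"
proof (induction n arbitrary: t)
  case 0
  then show ?case by (simp split: if_splits)
next
  case (Suc n)
  then obtain s where "qbar T Q n s * gl_weight Q s T t \<noteq> 0"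
    unfolding qbar.simps supp_sum_def by (auto elim: sum.not_neutral_contains_not_neutral)
  then have "s \<in> qbar_points T Q n" "\<exists>c\<in>gl_nodes Q. t = gl_point s T c"
    using Suc gl_weight_nonzeroD(2)[of Q s T t] by auto
  then show ?case by auto
qed

lemma qbar_Suc_eq_sum:
  assumes Q: "1 \<le> Q" and T: "0 \<le> T"
  shows "qbar T Q (Suc n) t = (\<Sum>s\<in>qbar_points T Q n. qbar T Q n s * gl_weight Q s T t)"
  unfolding qbar.simps
proof (rule supp_sum_eq_sum[OF finite_qbar_points[OF Q]])
  show "s \<in> qbar_points T Q n" if "qbar T Q n s * gl_weight Q s T t \<noteq> 0" for s
    using that qbar_nonzero_imp_mem_qbar_points[OF Q] by auto
  show "qbar T Q n s * gl_weight Q s T t = 0" if s: "s \<in> qbar_points T Q n" "s \<notin> {0..t}" for s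
  proof (rule ccontr)
    assume "qbar T Q n s * gl_weight Q s T t \<noteq> 0"
    then have "gl_weight Q s T t \<noteq> 0" by simp
    then obtain c where "s < T" "c \<in> gl_nodes Q" "t = gl_point s T c"
      using gl_weight_nonzeroD by blast
    then have "s < t" using gl_point_bounds gl_nodes_subset[OF Q] by blast
    moreover have "0 \<le> s" using subsetD[OF qbar_points_subset[OF Q T] s(1)] by simp
    ultimately show False using s(2) by simp
  qed
qed

lemma sum_gl_weight_mult_poly:
  fixes p :: "real poly"
  assumes Q: "1 \<le> Q" and deg: "degree p \<le> 2 * Q - 1" and sT: "s \<le> T"
    and A: "finite A" "gl_point s T ` gl_nodes Q \<subseteq> A"
  shows "(\<Sum>t\<in>A. gl_weight Q s T t * poly p t) = integral {s..T} (poly p)"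
proof (cases "s = T")
  case True
  then have "gl_weight Q s T t = 0" for t using gl_weight_nonzeroD(1) by blast
  then show ?thesis using True by simp
next
  case False
  with sT have sT: "s < T" by simp
  have "(\<Sum>t\<in>A. gl_weight Q s T t * poly p t) = (\<Sum>t\<in>gl_point s T ` gl_nodes Q. gl_weight Q s T t * poly p t)"
    using A gl_weight_nonzeroD(2)[of Q s T]
    by (intro sum.mono_neutral_right) (auto simp: image_iff)
  also have "\<dots> = (\<Sum>c\<in>gl_nodes Q. gl_weight Q s T (gl_point s T c) * poly p (gl_point s T c))"
    using inj_gl_point[OF sT] by (simp add: sum.reindex inj_on_subset[of _ UNIV])
  also have "\<dots> = integral {s..T} (poly p)"
    by (rule gauss_legendre_exact[OF Q sT deg])
  finally show ?thesis .
qed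

lemma integral_power_over_fact:
  fixes s T :: real
  assumes "s \<le> T"
  shows "integral {s..T} (\<lambda>t. (T - t) ^ m / fact m) = (T - s) ^ Suc m / fact (Suc m)"
proof -
  have "((\<lambda>t. - ((T - t) ^ Suc m) / fact (Suc m)) has_real_derivative (T - t) ^ m / fact m) (at t)" for t
    by (auto intro!: derivative_eq_intros simp: divide_simps simp del: power_Suc)
  then have "((\<lambda>t. (T - t) ^ m / fact m) has_integral
      (- ((T - T) ^ Suc m) / fact (Suc m) - (- ((T - s) ^ Suc m) / fact (Suc m)))) {s..T}"
    using assms
    by (intro fundamental_theorem_of_calculus)
      (auto simp: has_real_derivative_iff_has_vector_derivative[symmetric] intro: has_field_derivative_at_within)
  from integral_unique[OF this] show ?thesis by simp
qed

lemma sum_qbar_mult_power: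
  assumes Q: "1 \<le> Q" and T: "0 \<le> T"
  shows "n + m \<le> 2 * Q \<Longrightarrow>
    (\<Sum>t\<in>qbar_points T Q n. qbar T Q n t * ((T - t) ^ m / fact m)) = T ^ (n + m) / fact (n + m)"
proof (induction n arbitrary: m)
  case 0
  then show ?case by simp
next
  case (Suc n)
  let ?P = "qbar_points T Q" and ?w = "\<lambda>s t. gl_weight Q s T t"
  define p :: "real poly" where "p = smult (1 / fact m) ([:T, -1:] ^ m)"
  have poly_p: "poly p = (\<lambda>t. (T - t) ^ m / fact m)"
    by (simp add: p_def fun_eq_iff)
  have "degree p \<le> m"
    unfolding p_def using degree_power_le[of "[:T, -1:]" m] by simp
  then have deg: "degree p \<le> 2 * Q - 1" using Suc.prems by simp
  have "(\<Sum>t\<in>?P (Suc n). qbar T Q (Suc n) t * poly p t) =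
      (\<Sum>t\<in>?P (Suc n). \<Sum>s\<in>?P n. qbar T Q n s * (?w s t * poly p t))"
    unfolding qbar_Suc_eq_sum[OF Q T] sum_distrib_right by (simp add: mult.assoc)
  also have "\<dots> = (\<Sum>s\<in>?P n. qbar T Q n s * (\<Sum>t\<in>?P (Suc n). ?w s t * poly p t))"
    by (subst sum.swap) (simp add: sum_distrib_left)
  also have "\<dots> = (\<Sum>s\<in>?P n. qbar T Q n s * ((T - s) ^ Suc m / fact (Suc m)))"
  proof (intro sum.cong refl)
    fix s assume s: "s \<in> ?P n"
    then have "s \<le> T" using subsetD[OF qbar_points_subset[OF Q T] s] by simp
    moreover have "gl_point s T ` gl_nodes Q \<subseteq> ?P (Suc n)" using s by auto
    ultimately have "(\<Sum>t\<in>?P (Suc n). ?w s t * poly p t) = integral {s..T} (poly p)"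
      by (rule sum_gl_weight_mult_poly[OF Q deg _ finite_qbar_points[OF Q]])
    also have "\<dots> = (T - s) ^ Suc m / fact (Suc m)"
      unfolding poly_p using \<open>s \<le> T\<close> by (rule integral_power_over_fact)
    finally show "qbar T Q n s * (\<Sum>t\<in>?P (Suc n). ?w s t * poly p t) =
        qbar T Q n s * ((T - s) ^ Suc m / fact (Suc m))" by simp
  qed
  also have "\<dots> = T ^ (Suc n + m) / fact (Suc n + m)"
    using Suc.IH[of "Suc m"] Suc.prems by simp
  finally show ?case by (simp add: poly_p)
qed

lemma L2_sup_const_one:
  fixes W :: "real \<Rightarrow> 'a \<Rightarrow> real ^ 'd"
  assumes "prob_space M" "t \<in> {0..T}"
  shows "L2_sup M W T (\<lambda>_ _. 1) t = 1"
proof -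
  have "(\<integral>\<^sup>+ \<omega>. ennreal ((1::real)\<^sup>2) \<partial>M) = 1"
    using prob_space.emeasure_space_1[OF assms(1)] by simp
  moreover have "sqrt_ennreal 1 = 1" by (simp add: sqrt_ennreal_def)
  ultimately have "L2_sup M W T (\<lambda>_ _. 1) t = (SUP s\<in>{t..T}. SUP u\<in>{0..s}. SUP z\<in>(UNIV :: (real ^ 'd) set). 1 :: ennreal)"
    by (simp add: L2_sup_def)
  also have "\<dots> = 1" using assms(2) by simp
  finally show ?thesis .
qed

theorem lemma3p8:
  fixes T :: real and M :: "'a measure" and W :: "real \<Rightarrow> 'a \<Rightarrow> real ^ 'd"
    and Q k :: nat
  assumes "0 < T"
    and "prob_space M"
    and "std_brownian_motion M T W"
    and "1 \<le> Q"
    and "k \<le> 2 * Q - 1"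
  shows "gl_seminorm M W T k Q (\<lambda>t x. 1) = ereal (T ^ k / fact k)"
proof -
  have Q: "1 \<le> Q" and T: "0 \<le> T" using assms by auto
  let ?P = "qbar_points T Q k"
  have L2: "enn2ereal (L2_sup M W T (\<lambda>_ _. 1) t) = 1" if "t \<in> {0..T}" for t
    using L2_sup_const_one[OF assms(2) that, of W] by (simp add: one_ennreal.rep_eq)
  have "gl_seminorm M W T k Q (\<lambda>t x. 1) =
      (\<Sum>t\<in>?P. ereal (qbar T Q k t) * enn2ereal (L2_sup M W T (\<lambda>_ _. 1) t))"
    unfolding gl_seminorm_def
    using qbar_nonzero_imp_mem_qbar_points[OF Q] subsetD[OF qbar_points_subset[OF Q T]]
    by (intro supp_sum_eq_sum finite_qbar_points[OF Q]) auto
  also have "\<dots> = (\<Sum>t\<in>?P. ereal (qbar T Q k t))"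
    using L2 subsetD[OF qbar_points_subset[OF Q T]] by (intro sum.cong) auto
  also have "\<dots> = ereal (\<Sum>t\<in>?P. qbar T Q k t)"
    by (rule sum_ereal)
  also have "(\<Sum>t\<in>?P. qbar T Q k t) = T ^ k / fact k"
    using sum_qbar_mult_power[OF Q T, of k 0] assms(5) by simp
  finally show ?thesis .
qed

end
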